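(* Fix $n\in\mathbb{N}$, $n\ge 1$. For every $\Delta\in\mathcal{P}_n$, every $x\in\{0,1\}^n$ and every $i\in\mathbb{Z}_n$: $f^{(\Delta)}_{32,n}(x)_i=1$ if and only if $lab_\Delta((i+1,i))=lab_\Delta((i-1,i))=\oplus$ and $(x_{i-1},x_i,x_{i+1})=(1,0,1)$.
   Context: Cells are indexed by $\mathbb{Z}_n=\{0,\dots,n-1\}$, indices modulo $n$. Rule $32$ has local rule $r_{32}(x_1,x_2,x_3)=x_1\wedge\neg x_2\wedge x_3$ and global function $f_{32,n}(x)_i=r_{32}(x_{i-1},x_i,x_{i+1})$. An update schedule is an ordered partition $\Delta=(\Delta_1,\dots,\Delta_k)$ of $\mathbb{Z}_n$ into nonempty blocks; $\mathcal{P}_n$ is the set of them. For a block $B$ let $f^{(B)}(x)_i=f_{32,n}(x)_i$ if $i\in B$ and $x_i$ otherwise; $f^{(\Delta)}_{32,n}=f^{(\Delta_k)}\circ\cdots\circ f^{(\Delta_1)}$. For $u,v\in\mathbb{Z}_n$ with $u\in\Delta_a$, $v\in\Delta_b$, $lab_\Delta((u,v))=\oplus$ if $b\le a$ and $\ominus$ if $a<b$. *)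

theory Defs
  imports Main
begin

text \<open>Cells are 0..n-1; a configuration is a function nat => bool (only the
values at 0..n-1 matter, all indices are taken modulo n).\<close>

definition r32 :: "bool \<Rightarrow> bool \<Rightarrow> bool \<Rightarrow> bool" where
  "r32 x1 x2 x3 = (x1 \<and> \<not> x2 \<and> x3)"

definition f32 :: "nat \<Rightarrow> (nat \<Rightarrow> bool) \<Rightarrow> nat \<Rightarrow> bool" where
  "f32 n x i = r32 (x ((i + n - 1) mod n)) (x (i mod n)) (x ((i + 1) mod n))"

text \<open>An update schedule: an ordered partition of {0..<n} into nonempty blocks,
given as the list of blocks [Delta_1, ..., Delta_k].\<close>
definition ordered_partition :: "nat \<Rightarrow> nat set list \<Rightarrow> bool" where
  "ordered_partition n D \<longleftrightarrow>
     (\<forall>B\<in>set D. B \<noteq> {}) \<and> \<Union>(set D) = {..<n} \<and>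
     (\<forall>a<length D. \<forall>b<length D. a \<noteq> b \<longrightarrow> D ! a \<inter> D ! b = {})"

definition block_update :: "nat \<Rightarrow> nat set \<Rightarrow> (nat \<Rightarrow> bool) \<Rightarrow> (nat \<Rightarrow> bool)" where
  "block_update n B x = (\<lambda>i. if i \<in> B then f32 n x i else x i)"

text \<open>f^(Delta) = f^(Delta_k) o ... o f^(Delta_1): Delta_1 is applied first.\<close>
definition f32_sched :: "nat \<Rightarrow> nat set list \<Rightarrow> (nat \<Rightarrow> bool) \<Rightarrow> (nat \<Rightarrow> bool)" where
  "f32_sched n D x = foldl (\<lambda>y B. block_update n B y) x D"

definition blk :: "nat set list \<Rightarrow> nat \<Rightarrow> nat" where
  "blk D u = (THE a. a < length D \<and> u \<in> D ! a)"

datatype label = Oplus | Ominus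

definition lab :: "nat set list \<Rightarrow> nat \<times> nat \<Rightarrow> label" where
  "lab D e = (if blk D (snd e) \<le> blk D (fst e) then Oplus else Ominus)"

end

theory Submission
  imports Defs
begin

text \<open>Under a sequential schedule every cell is updated exactly once, in its own block.
So cell \<open>i\<close> ends up as \<open>r32\<close> of the values its neighbours hold just before that block:
a neighbour in the same or a later block still holds its initial value, whereas a
neighbour updated earlier read the still unchanged \<open>x i\<close> as one of its outer arguments.
Since rule 32 requires \<open>x i\<close> to be 0 and both outer arguments to be 1, an earlier
updated neighbour is 0 by then, and the final value of \<open>i\<close> is 1 exactly when both
neighbours are labelled \<open>\<oplus>\<close> and the initial pattern is 101.\<close>

lemma f32_sched_take_Suc:
  "k < length D \<Longrightarrow>
   f32_sched n (take (Suc k) D) x = block_update n (D ! k) (f32_sched n (take k D) x)"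
  by (simp add: f32_sched_def take_Suc_conv_app_nth)

lemma f32_sched_take_unchanged:
  assumes "k \<le> k'" "k' \<le> length D" "\<And>m. k \<le> m \<Longrightarrow> m < k' \<Longrightarrow> c \<notin> D ! m"
  shows "f32_sched n (take k' D) x c = f32_sched n (take k D) x c"
  using assms
proof (induction k' rule: dec_induct)
  case base
  then show ?case by simp
next
  case (step k')
  then show ?case by (simp add: f32_sched_take_Suc block_update_def)
qed

lemma blk_eqI:
  assumes "ordered_partition n D" "m < length D" "c \<in> D ! m"
  shows "blk D c = m"
  unfolding blk_def
proof (rule the_equality)
  show "m < length D \<and> c \<in> D ! m" using assms(2,3) by simp
next
  fix m' assume "m' < length D \<and> c \<in> D ! m'"
  then show "m' = m" using assms unfolding ordered_partition_def by blast
qed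

lemma blk_in_block:
  assumes "ordered_partition n D" "c < n"
  shows "blk D c < length D" "c \<in> D ! blk D c"
proof -
  have "c \<in> \<Union>(set D)" using assms unfolding ordered_partition_def by simp
  then obtain m where "m < length D" "c \<in> D ! m" by (auto simp: in_set_conv_nth)
  with blk_eqI[OF assms(1)] show "blk D c < length D" "c \<in> D ! blk D c" by simp_all
qed

lemma f32_sched_take_before_blk:
  assumes "ordered_partition n D" "c < n" "k \<le> blk D c"
  shows "f32_sched n (take k D) x c = x c"
proof -
  have "f32_sched n (take k D) x c = f32_sched n (take 0 D) x c"
  proof (rule f32_sched_take_unchanged)
    fix m assume "m < k"
    then show "c \<notin> D ! m"
      using assms blk_eqI[OF assms(1), of m c] blk_in_block(1)[OF assms(1,2)] by auto
  qed (use assms blk_in_block(1)[OF assms(1,2)] in simp_all)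
  then show ?thesis by (simp add: f32_sched_def)
qed

lemma f32_sched_take_after_blk:
  assumes "ordered_partition n D" "c < n" "blk D c < k" "k \<le> length D"
  shows "f32_sched n (take k D) x c = f32 n (f32_sched n (take (blk D c) D) x) c"
proof -
  have "f32_sched n (take k D) x c = f32_sched n (take (Suc (blk D c)) D) x c"
  proof (rule f32_sched_take_unchanged)
    fix m assume "Suc (blk D c) \<le> m" "m < k"
    then show "c \<notin> D ! m" using assms blk_eqI[OF assms(1), of m c] by auto
  qed (use assms in simp_all)
  then show ?thesis
    using blk_in_block[OF assms(1,2)] by (simp add: f32_sched_take_Suc block_update_def)
qed

lemma f32_sched_take_neighbour_dies:
  assumes "ordered_partition n D" "i < n" "j < n"
    and "i = (j + n - 1) mod n \<or> i = (j + 1) mod n"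
    and "blk D j < blk D i" and "\<not> x i"
  shows "\<not> f32_sched n (take (blk D i) D) x j"
proof -
  have "f32_sched n (take (blk D j) D) x i = x i"
    using assms by (intro f32_sched_take_before_blk) simp_all
  moreover have "f32_sched n (take (blk D i) D) x j = f32 n (f32_sched n (take (blk D j) D) x) j"
    using assms blk_in_block(1)[OF assms(1,2)] by (intro f32_sched_take_after_blk) simp_all
  ultimately show ?thesis
    using assms(4,6) by (auto simp: f32_def r32_def)
qed

lemma pred_mod_succ_mod:
  assumes "i < (n::nat)"
  shows "((i + n - 1) mod n + 1) mod n = i"
  using assms by (cases i) (simp_all add: mod_Suc_eq)

lemma succ_mod_pred_mod:
  assumes "i < (n::nat)"
  shows "((i + 1) mod n + n - 1) mod n = i"
proof (cases "i + 1 = n")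
  case False
  with assms show ?thesis by simp
qed (use assms in simp)

theorem mainTheorem12:
  fixes n :: nat and D :: "nat set list" and x :: "nat \<Rightarrow> bool" and i :: nat
  assumes "n \<ge> 1" and "ordered_partition n D" and "i < n"
  shows "f32_sched n D x i \<longleftrightarrow>
           lab D ((i + 1) mod n, i) = Oplus \<and> lab D ((i + n - 1) mod n, i) = Oplus \<and>
           x ((i + n - 1) mod n) \<and> \<not> x i \<and> x ((i + 1) mod n)"
proof -
  define l where "l = (i + n - 1) mod n"
  define r where "r = (i + 1) mod n"
  define y where "y = f32_sched n (take (blk D i) D) x"
  have part: "ordered_partition n D" and "l < n" "r < n"
    using assms by (simp_all add: l_def r_def)
  have "f32_sched n D x i = f32 n y i"
    using f32_sched_take_after_blk[OF part \<open>i < n\<close>, of "length D"] blk_in_block[OF part \<open>i < n\<close>]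
    by (simp add: y_def)
  also have "\<dots> = r32 (y l) (x i) (y r)"
    using f32_sched_take_before_blk[OF part \<open>i < n\<close>] \<open>i < n\<close> by (simp add: f32_def y_def l_def r_def)
  finally have final: "f32_sched n D x i = r32 (y l) (x i) (y r)" .
  have "blk D i \<le> blk D c \<Longrightarrow> y c = x c" if "c < n" for c
    using f32_sched_take_before_blk[OF part that] by (simp add: y_def)
  moreover have "blk D l < blk D i \<Longrightarrow> \<not> x i \<Longrightarrow> \<not> y l"
    using f32_sched_take_neighbour_dies[OF part \<open>i < n\<close> \<open>l < n\<close>] pred_mod_succ_mod[OF \<open>i < n\<close>]
    by (simp add: y_def l_def)
  moreover have "blk D r < blk D i \<Longrightarrow> \<not> x i \<Longrightarrow> \<not> y r"
    using f32_sched_take_neighbour_dies[OF part \<open>i < n\<close> \<open>r < n\<close>] succ_mod_pred_mod[OF \<open>i < n\<close>]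
    by (simp add: y_def r_def)
  ultimately show ?thesis
    unfolding final lab_def l_def[symmetric] r_def[symmetric] using \<open>l < n\<close> \<open>r < n\<close>
    by (auto simp: r32_def not_le)
qed

end
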